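(* Let $b$ be a block and $r$ a round. If in round $r$ there are $2f+1$ blocks from distinct validators that are certificates for $b$, then every (valid) block of every round $r'>r$ has a path to some round-$r$ certificate for $b$.
   Context: There are $n=3f+1$ validators, at most $f$ Byzantine. Blocks are organized in rounds; every valid block of round $r$ has as parents (hash references) at least $2f+1$ blocks of round $r-1$ from distinct validators (and possibly earlier blocks). There is a path from $b$ to $b'$ if $b'$ is reached from $b$ by repeatedly following parent references. A block $b$ of round $r'$ is a vote for a block $L$ of round $r<r'$ with author $a$ if the first block with author $a$ and round $r$ encountered in the deterministic depth-first search from $b$ along parent references is $L$. For a fixed wave length $w\ge 4$, a block $c$ of round $r+w-1$ is a certificate for a block $L$ of round $r$ if at least $2f+1$ of $c$'s parents (round $r+w-2$ blocks) are votes for $L$. *)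

theory Defs
  imports Main
begin

fun first_some :: "'a option list \<Rightarrow> 'a option" where
  "first_some [] = None"
| "first_some (Some z # _) = Some z"
| "first_some (None # xs) = first_some xs"

text \<open>Deterministic depth-first search (preorder, parents visited in list order) from a block,
  returning the first encountered block satisfying P. The natural number is a depth bound;
  it is instantiated with the round of the start block, which suffices since parents have
  strictly smaller rounds.\<close>
fun dfs_find :: "('b \<Rightarrow> 'b list) \<Rightarrow> ('b \<Rightarrow> bool) \<Rightarrow> nat \<Rightarrow> 'b \<Rightarrow> 'b option" where
  "dfs_find ps P 0 x = (if P x then Some x else None)"
| "dfs_find ps P (Suc k) x =
     (if P x then Some x else first_some (map (dfs_find ps P k) (ps x)))"

definition edges :: "('b \<Rightarrow> 'b list) \<Rightarrow> ('b \<times> 'b) set" where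
  "edges ps = {(x, y). y \<in> set (ps x)}"

definition is_vote :: "('b \<Rightarrow> 'v) \<Rightarrow> ('b \<Rightarrow> nat) \<Rightarrow> ('b \<Rightarrow> 'b list) \<Rightarrow> 'b \<Rightarrow> 'b \<Rightarrow> bool" where
  "is_vote author rnd ps b L \<longleftrightarrow> rnd L < rnd b \<and>
     dfs_find ps (\<lambda>x. author x = author L \<and> rnd x = rnd L) (rnd b) b = Some L"

definition is_certificate ::
  "nat \<Rightarrow> nat \<Rightarrow> ('b \<Rightarrow> 'v) \<Rightarrow> ('b \<Rightarrow> nat) \<Rightarrow> ('b \<Rightarrow> 'b list) \<Rightarrow> 'b \<Rightarrow> 'b \<Rightarrow> bool" where
  "is_certificate f w author rnd ps c L \<longleftrightarrow> rnd c = rnd L + w - 1 \<and>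
     card {p \<in> set (ps c). rnd p = rnd L + w - 2 \<and> is_vote author rnd ps p L} \<ge> 2 * f + 1"

definition valid_dag ::
  "nat \<Rightarrow> 'v set \<Rightarrow> 'v set \<Rightarrow> ('b \<Rightarrow> 'v) \<Rightarrow> ('b \<Rightarrow> nat) \<Rightarrow> ('b \<Rightarrow> 'b list) \<Rightarrow> 'b set \<Rightarrow> bool" where
  "valid_dag f V Byz author rnd ps B \<longleftrightarrow>
     finite V \<and> card V = 3 * f + 1 \<and> Byz \<subseteq> V \<and> card Byz \<le> f \<and>
     (\<forall>x\<in>B. author x \<in> V) \<and>
     (\<forall>x\<in>B. \<forall>p\<in>set (ps x). p \<in> B \<and> rnd p < rnd x) \<and>
     (\<forall>x\<in>B. 0 < rnd x \<longrightarrow> (\<exists>S \<subseteq> set (ps x). card S \<ge> 2 * f + 1 \<and>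
          (\<forall>p\<in>S. rnd p = rnd x - 1) \<and> inj_on author S)) \<and>
     (\<forall>x\<in>B. \<forall>y\<in>B. author x = author y \<and> author x \<notin> Byz \<and> rnd x = rnd y \<longrightarrow> x = y)"

end

theory Submission
  imports Defs
begin

text \<open>Two sets of 2f+1 distinct authors among the 3f+1 validators share at least f+1 authors,
  hence an honest one. Since an honest validator authors at most one block per round, the 2f+1
  distinct-author parents of a round r+1 block must include one of the 2f+1 given round r
  blocks; a block of a later round descends to round r+1 through parents one round at a time.\<close>

lemma quorum_intersection_honest:
  assumes "finite V" "A \<subseteq> V" "A' \<subseteq> V" "finite Byz"
    and "card V + card Byz < card A + card A'"
  shows "\<exists>a\<in>A \<inter> A'. a \<notin> Byz"
proof -
  have "card (A \<union> A') + card (A \<inter> A') = card A + card A'"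
    using assms(1-3) by (metis card_Un_Int finite_subset)
  moreover have "card (A \<union> A') \<le> card V"
    using assms(1-3) by (simp add: card_mono)
  ultimately have "card Byz < card (A \<inter> A')"
    using assms(5) by linarith
  then show ?thesis
    using card_mono[OF assms(4)] by (meson leD subsetI)
qed

lemma valid_dag_parent_in_blocks:
  "valid_dag f V Byz author rnd ps B \<Longrightarrow> x \<in> B \<Longrightarrow> p \<in> set (ps x) \<Longrightarrow> p \<in> B"
  unfolding valid_dag_def by blast

lemma valid_dag_honest_unique:
  "valid_dag f V Byz author rnd ps B \<Longrightarrow> x \<in> B \<Longrightarrow> y \<in> B \<Longrightarrow> author x = author y \<Longrightarrow>
    author x \<notin> Byz \<Longrightarrow> rnd x = rnd y \<Longrightarrow> x = y"
  unfolding valid_dag_def by blast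

lemma valid_dag_parents_quorum:
  assumes "valid_dag f V Byz author rnd ps B" "x \<in> B" "0 < rnd x"
  obtains S where "S \<subseteq> set (ps x)" "S \<subseteq> B" "card S \<ge> 2 * f + 1"
    "\<forall>p\<in>S. rnd p = rnd x - 1" "inj_on author S"
proof -
  obtain S where S: "S \<subseteq> set (ps x)" "card S \<ge> 2 * f + 1"
    "\<forall>p\<in>S. rnd p = rnd x - 1" "inj_on author S"
    using assms unfolding valid_dag_def by meson
  moreover have "S \<subseteq> B"
    using S(1) valid_dag_parent_in_blocks[OF assms(1,2)] by blast
  ultimately show thesis
    using that by simp
qed

lemma valid_dag_parent_in_quorum:
  assumes dag: "valid_dag f V Byz author rnd ps B"
    and "x \<in> B" "rnd x = Suc r"
    and C: "C \<subseteq> B" "card C \<ge> 2 * f + 1" "inj_on author C" "\<forall>c\<in>C. rnd c = r"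
  shows "\<exists>c\<in>C. c \<in> set (ps x)"
proof -
  obtain S where S: "S \<subseteq> set (ps x)" "S \<subseteq> B" "card S \<ge> 2 * f + 1"
    "\<forall>p\<in>S. rnd p = r" "inj_on author S"
    using valid_dag_parents_quorum[OF dag \<open>x \<in> B\<close>] \<open>rnd x = Suc r\<close> by auto
  have V: "finite V" "card V = 3 * f + 1" "Byz \<subseteq> V" "card Byz \<le> f" "author ` B \<subseteq> V"
    using dag unfolding valid_dag_def by auto
  have "card (author ` S) = card S" "card (author ` C) = card C"
    using S(5) C(3) by (simp_all add: card_image)
  then have quorums: "card V + card Byz < card (author ` S) + card (author ` C)"
    using S(3) C(2) V(2,4) by linarith
  have "author ` S \<subseteq> V" "author ` C \<subseteq> V"
    using V(5) S(2) C(1) by auto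
  then obtain a where a: "a \<in> author ` S" "a \<in> author ` C" "a \<notin> Byz"
    using quorum_intersection_honest[OF V(1) _ _ finite_subset[OF V(3,1)] quorums] by blast
  obtain p where "p \<in> S" "author p = a"
    using a(1) by blast
  moreover obtain c where "c \<in> C" "author c = a"
    using a(2) by blast
  moreover have "p = c"
    using valid_dag_honest_unique[OF dag, of p c] calculation a(3) S(2,4) C(1,4) by auto
  ultimately show ?thesis
    using S(1) by blast
qed

lemma valid_dag_reaches_quorum:
  assumes dag: "valid_dag f V Byz author rnd ps B"
    and C: "C \<subseteq> B" "card C \<ge> 2 * f + 1" "inj_on author C" "\<forall>c\<in>C. rnd c = r"
  shows "x \<in> B \<Longrightarrow> r < rnd x \<Longrightarrow> \<exists>c\<in>C. (x, c) \<in> (edges ps)\<^sup>+"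
proof (induction "rnd x" arbitrary: x rule: less_induct)
  case less
  show ?case
  proof (cases "rnd x = Suc r")
    case True
    then obtain c where "c \<in> C" "c \<in> set (ps x)"
      using valid_dag_parent_in_quorum[OF dag less.prems(1) True C] by blast
    moreover from this have "(x, c) \<in> (edges ps)\<^sup>+"
      by (intro r_into_trancl') (simp add: edges_def)
    ultimately show ?thesis
      by blast
  next
    case False
    have "0 < rnd x"
      using less.prems(2) by simp
    then obtain S where S: "S \<subseteq> set (ps x)" "S \<subseteq> B" "card S \<ge> 2 * f + 1"
      "\<forall>p\<in>S. rnd p = rnd x - 1"
      using valid_dag_parents_quorum[OF dag less.prems(1)] by metis
    then have "S \<noteq> {}"
      by auto
    then obtain p where "p \<in> S"
      by blast
    then have "(x, p) \<in> edges ps" "p \<in> B" "rnd p < rnd x" "r < rnd p"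
      using S False less.prems(2) by (auto simp: edges_def)
    then obtain c where "c \<in> C" "(p, c) \<in> (edges ps)\<^sup>+"
      using less.hyps by blast
    moreover from this have "(x, c) \<in> (edges ps)\<^sup>+"
      using \<open>(x, p) \<in> edges ps\<close> by (simp add: trancl_into_trancl2)
    ultimately show ?thesis
      by blast
  qed
qed

theorem lemma1:
  fixes f w r :: nat and V Byz :: "'v set" and author :: "'b \<Rightarrow> 'v"
    and rnd :: "'b \<Rightarrow> nat" and ps :: "'b \<Rightarrow> 'b list" and B C :: "'b set" and b :: 'b
  assumes "valid_dag f V Byz author rnd ps B"
    and "w \<ge> 4"
    and "b \<in> B"
    and "C \<subseteq> B" and "card C = 2 * f + 1" and "inj_on author C"
    and "\<forall>c\<in>C. rnd c = r \<and> is_certificate f w author rnd ps c b"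
  shows "\<forall>x\<in>B. r < rnd x \<longrightarrow>
           (\<exists>c\<in>B. rnd c = r \<and> is_certificate f w author rnd ps c b \<and> (x, c) \<in> (edges ps)\<^sup>+)"
proof (intro ballI impI)
  fix x assume "x \<in> B" "r < rnd x"
  moreover have "\<forall>c\<in>C. rnd c = r"
    using assms(7) by blast
  ultimately obtain c where "c \<in> C" "(x, c) \<in> (edges ps)\<^sup>+"
    using valid_dag_reaches_quorum[OF assms(1,4) _ assms(6)] assms(5) by (metis order_refl)
  then show "\<exists>c\<in>B. rnd c = r \<and> is_certificate f w author rnd ps c b \<and> (x, c) \<in> (edges ps)\<^sup>+"
    using assms(4,7) by blast
qed

end
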